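(* Let $G$ be a group with finite generating set $S$ that contains an element $g$ of infinite order in its center such that $G/\langle g\rangle$ is not a torsion group. Then there is a snake embedding from $(\mathbb{Z}^2,\{a,b\})$ into $(G,S\cup\{g\})$, where $\{a,b\}$ is the standard generating set of $\mathbb{Z}^2$.
   Context: A group is torsion if every element has finite order. An invertible-reversible transducer is a tuple $\mathcal M=(Q,S',T',q_0,\delta,\eta)$ with $Q$ a finite set of states, $q_0\in Q$, $\delta:Q\times S'\to Q$, $\eta:Q\times S'\to T'$ with $\eta(q,\cdot)$ injective for every $q$, and such that for all $q\in Q$, $s\in S'$ there is a unique $q'$ with $\delta(q',s)=q$. One extends by $\eta(q,s^{-1})=\eta(q',s)^{-1}$ and $\delta(q,s^{-1})=q'$ where $\delta(q',s)=q$. For a word $w$, $q_w$ is the state reached from $q_0$ after reading $w$, and $f_{\mathcal M}(\epsilon)=\epsilon$, $f_{\mathcal M}(ws^{\pm1})=f_{\mathcal M}(w)\eta(q_w,s^{\pm1})$. For groups $(K,S')$, $(H,T')$ with finite generating sets, a map $\phi:K\to H$ is a snake embedding if there is such a transducer with $\phi(k)=\overline{f_{\mathcal M}(w)}$ for every word $w$ over $S'\cup S'^{-1}$ representing $k$, and $f_{\mathcal M}(w)=_H f_{\mathcal M}(w')$ iff $w=_K w'$. *)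

theory Defs
  imports "HOL-Algebra.Algebra"
begin

definition torsion_group :: "('a, 'b) monoid_scheme \<Rightarrow> bool" where
  "torsion_group G \<longleftrightarrow> (\<forall>x\<in>carrier G. \<exists>n::nat. n > 0 \<and> x [^]\<^bsub>G\<^esub> n = \<one>\<^bsub>G\<^esub>)"

text \<open>Words over S \<union> S^-1: a letter (s, True) stands for s, (s, False) for s^-1.\<close>
definition words :: "'a set \<Rightarrow> ('a \<times> bool) list set" where
  "words S = lists (S \<times> UNIV)"

fun eval_word :: "('a, 'b) monoid_scheme \<Rightarrow> ('a \<times> bool) list \<Rightarrow> 'a" where
  "eval_word G [] = \<one>\<^bsub>G\<^esub>"
| "eval_word G ((s, True) # w) = s \<otimes>\<^bsub>G\<^esub> eval_word G w"
| "eval_word G ((s, False) # w) = inv\<^bsub>G\<^esub> s \<otimes>\<^bsub>G\<^esub> eval_word G w"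

definition inv_rev_transducer ::
  "'q set \<Rightarrow> 'a set \<Rightarrow> 'b set \<Rightarrow> 'q \<Rightarrow> ('q \<Rightarrow> 'a \<Rightarrow> 'q) \<Rightarrow> ('q \<Rightarrow> 'a \<Rightarrow> 'b) \<Rightarrow> bool" where
  "inv_rev_transducer Q S' T' q0 \<delta> \<eta> \<longleftrightarrow>
     finite Q \<and> q0 \<in> Q \<and>
     (\<forall>q\<in>Q. \<forall>s\<in>S'. \<delta> q s \<in> Q \<and> \<eta> q s \<in> T') \<and>
     (\<forall>q\<in>Q. inj_on (\<eta> q) S') \<and>
     (\<forall>q\<in>Q. \<forall>s\<in>S'. \<exists>!q'. q' \<in> Q \<and> \<delta> q' s = q)"

text \<open>Extension of delta to inverse letters: delta(q, s^-1) = the q' with delta(q', s) = q.\<close>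
definition delta_inv :: "'q set \<Rightarrow> ('q \<Rightarrow> 'a \<Rightarrow> 'q) \<Rightarrow> 'q \<Rightarrow> 'a \<Rightarrow> 'q" where
  "delta_inv Q \<delta> q s = (THE q'. q' \<in> Q \<and> \<delta> q' s = q)"

fun tr_step :: "'q set \<Rightarrow> ('q \<Rightarrow> 'a \<Rightarrow> 'q) \<Rightarrow> 'q \<Rightarrow> 'a \<times> bool \<Rightarrow> 'q" where
  "tr_step Q \<delta> q (s, True) = \<delta> q s"
| "tr_step Q \<delta> q (s, False) = delta_inv Q \<delta> q s"

fun tr_out :: "'q set \<Rightarrow> ('q \<Rightarrow> 'a \<Rightarrow> 'q) \<Rightarrow> ('q \<Rightarrow> 'a \<Rightarrow> 'b) \<Rightarrow> 'q \<Rightarrow> 'a \<times> bool \<Rightarrow> 'b \<times> bool" where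
  "tr_out Q \<delta> \<eta> q (s, True) = (\<eta> q s, True)"
| "tr_out Q \<delta> \<eta> q (s, False) = (\<eta> (delta_inv Q \<delta> q s) s, False)"

text \<open>State q_w reached from q0 after reading w.\<close>
definition tr_state :: "'q set \<Rightarrow> 'q \<Rightarrow> ('q \<Rightarrow> 'a \<Rightarrow> 'q) \<Rightarrow> ('a \<times> bool) list \<Rightarrow> 'q" where
  "tr_state Q q0 \<delta> w = foldl (tr_step Q \<delta>) q0 w"

text \<open>f_M(epsilon) = epsilon, f_M(w x) = f_M(w) eta(q_w, x); i.e. the i-th output letter is
  eta(q_{w[0..i)}, w_i).\<close>
definition tr_fun :: "'q set \<Rightarrow> 'q \<Rightarrow> ('q \<Rightarrow> 'a \<Rightarrow> 'q) \<Rightarrow> ('q \<Rightarrow> 'a \<Rightarrow> 'b)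
                \<Rightarrow> ('a \<times> bool) list \<Rightarrow> ('b \<times> bool) list" where
  "tr_fun Q q0 \<delta> \<eta> w =
     map (\<lambda>i. tr_out Q \<delta> \<eta> (tr_state Q q0 \<delta> (take i w)) (w ! i)) [0..<length w]"

text \<open>Snake embedding (K, S') \<rightarrow> (H, T'). States are represented as a finite set of naturals
  (no loss of generality).\<close>
definition snake_embedding ::
  "('a, 'c) monoid_scheme \<Rightarrow> 'a set \<Rightarrow> ('b, 'd) monoid_scheme \<Rightarrow> 'b set \<Rightarrow> ('a \<Rightarrow> 'b) \<Rightarrow> bool" where
  "snake_embedding K S' H T' \<phi> \<longleftrightarrow>
     (\<exists>(Q::nat set) q0 \<delta> \<eta>. inv_rev_transducer Q S' T' q0 \<delta> \<eta> \<and>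
        (\<forall>k\<in>carrier K. \<forall>w\<in>words S'. eval_word K w = k \<longrightarrow>
             \<phi> k = eval_word H (tr_fun Q q0 \<delta> \<eta> w)) \<and>
        (\<forall>w\<in>words S'. \<forall>w'\<in>words S'.
             eval_word H (tr_fun Q q0 \<delta> \<eta> w) = eval_word H (tr_fun Q q0 \<delta> \<eta> w')
             \<longleftrightarrow> eval_word K w = eval_word K w'))"

definition Z2 :: "(int \<times> int) monoid" where
  "Z2 = \<lparr>carrier = UNIV, monoid.mult = (\<lambda>x y. (fst x + fst y, snd x + snd y)), monoid.one = (0, 0)\<rparr>"

end

theory Submission
  imports Defs
begin

(* Write <g> for the central infinite cyclic subgroup generate G {g}.  If every positive word
   over S had finite order modulo <g>, then each s^-1 would agree with a positive power of s
   up to <g>, so every element of G would be a positive word times an element of <g>, and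
   G/<g> would be torsion.  Hence there is a shortest positive word L = s_1 ... s_k of infinite
   order modulo <g>; let h be its product.

   The transducer has the states 0, ..., k-1; it writes a as g and b as the next letter of L,
   cyclically, so the word for (m, n) with n = q k + r evaluates to g^m h^q s_1 ... s_r.
   If two such values coincide with r <= r', then the factor s_(r+1) ... s_r' of L is a
   conjugate of g^(m-m') h^(q-q').  Being shorter than L, it has finite order modulo <g>,
   which forces q = q'.  It then lies in <g>, so it is central and could be deleted from L,
   contradicting minimality unless r = r'.  Finally m = m' as g has infinite order. *)

definition (in monoid) list_prod :: "'a list \<Rightarrow> 'a" where
  "list_prod xs = foldr (\<otimes>) xs \<one>"

lemma (in monoid) list_prod_Nil [simp]: "list_prod [] = \<one>"
  and list_prod_Cons [simp]: "list_prod (x # xs) = x \<otimes> list_prod xs"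
  by (simp_all add: list_prod_def)

lemma (in monoid) list_prod_closed [simp]: "set xs \<subseteq> carrier G \<Longrightarrow> list_prod xs \<in> carrier G"
  by (induction xs) auto

lemma (in monoid) list_prod_append:
  "set xs \<subseteq> carrier G \<Longrightarrow> set ys \<subseteq> carrier G \<Longrightarrow> list_prod (xs @ ys) = list_prod xs \<otimes> list_prod ys"
  by (induction xs) (auto simp: m_assoc)

lemma (in monoid) list_prod_replicate: "x \<in> carrier G \<Longrightarrow> list_prod (replicate n x) = x [^] n"
  by (induction n) (simp_all add: nat_pow_Suc2 [symmetric])

definition (in group) infinite_order_mod :: "'a set \<Rightarrow> 'a \<Rightarrow> bool" where
  "infinite_order_mod N x \<longleftrightarrow> x \<in> carrier G \<and> (\<forall>n::nat. 0 < n \<longrightarrow> x [^] n \<notin> N)"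

lemma (in group) infinite_order_mod_int_pow_notin:
  assumes N: "subgroup N G" and x: "infinite_order_mod N x" and i: "i \<noteq> 0"
  shows "x [^] (i::int) \<notin> N"
proof
  assume xi: "x [^] i \<in> N"
  have x_closed: "x \<in> carrier G" using x by (simp add: infinite_order_mod_def)
  have "x [^] \<bar>i\<bar> \<in> N"
  proof (cases "i < 0")
    case True
    then have "x [^] \<bar>i\<bar> = inv (x [^] i)" using int_pow_neg[OF x_closed, of i] by simp
    then show ?thesis using xi N by (simp add: subgroup.m_inv_closed)
  next
    case False
    then show ?thesis using xi by simp
  qed
  then have "x [^] nat \<bar>i\<bar> \<in> N" by simp
  moreover have "0 < nat \<bar>i\<bar>" using i by simp
  ultimately show False using x unfolding infinite_order_mod_def by blast
qed

lemma (in group) infinite_order_mod_int_pow: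
  assumes "subgroup N G" "infinite_order_mod N x" "i \<noteq> 0"
  shows "infinite_order_mod N (x [^] (i::int))"
proof -
  have "(x [^] i) [^] n = x [^] (i * int n)" for n :: nat
    using assms(2) by (simp add: infinite_order_mod_def int_pow_pow flip: int_pow_int)
  then show ?thesis
    using assms infinite_order_mod_int_pow_notin[OF assms(1,2)]
    by (simp add: infinite_order_mod_def)
qed

lemma (in group) conj_nat_pow:
  assumes "x \<in> carrier G" "y \<in> carrier G"
  shows "(inv y \<otimes> x \<otimes> y) [^] (n::nat) = inv y \<otimes> x [^] n \<otimes> y"
proof (induction n)
  case (Suc n)
  have cancel: "y \<otimes> (inv y \<otimes> t) = t" if "t \<in> carrier G" for t
    using that assms(2) by (simp add: m_assoc [symmetric])
  show ?case using Suc assms by (simp add: m_assoc cancel)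
qed (use assms in simp)

lemma (in group) infinite_order_mod_conj:
  assumes "N \<lhd> G" "infinite_order_mod N x" "y \<in> carrier G"
  shows "infinite_order_mod N (inv y \<otimes> x \<otimes> y)"
proof -
  interpret normal N G by fact
  have x: "x \<in> carrier G" using assms(2) by (simp add: infinite_order_mod_def)
  have "x [^] n = y \<otimes> (inv y \<otimes> x [^] n \<otimes> y) \<otimes> inv y" for n :: nat
    using x assms(3) by (simp add: conjugation_is_surj)
  then have "x [^] n \<in> N" if "(inv y \<otimes> x \<otimes> y) [^] n \<in> N" for n :: nat
    using that inv_op_closed2[OF assms(3)] conj_nat_pow[OF x assms(3)] by metis
  then show ?thesis using assms x by (auto simp: infinite_order_mod_def)
qed

lemma (in normal) exists_infinite_order_mod:
  assumes "\<not> torsion_group (G Mod H)"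
  shows "\<exists>x. infinite_order_mod H x"
proof -
  obtain xH where xH: "xH \<in> carrier (G Mod H)"
    and no_pow: "\<forall>n::nat. 0 < n \<longrightarrow> xH [^]\<^bsub>G Mod H\<^esub> n \<noteq> \<one>\<^bsub>G Mod H\<^esub>"
    using assms unfolding torsion_group_def by blast
  obtain x where x: "x \<in> carrier G" and "xH = H #> x"
    using xH by (auto simp: carrier_FactGroup)
  have "x [^] n \<notin> H" if "0 < n" for n :: nat
  proof
    assume "x [^] n \<in> H"
    then have "H #> x [^] n = H" using x by (simp add: coset_join2 is_subgroup)
    then show False using no_pow that FactGroup_pow[OF x] \<open>xH = H #> x\<close> by simp
  qed
  then show ?thesis using x by (auto simp: infinite_order_mod_def)
qed

lemma (in group) inv_commute:
  assumes "a \<in> carrier G" "x \<in> carrier G" "a \<otimes> x = x \<otimes> a"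
  shows "inv a \<otimes> x = x \<otimes> inv a"
proof -
  have "inv a \<otimes> x = inv a \<otimes> (x \<otimes> a) \<otimes> inv a" using assms by (simp add: m_assoc)
  also have "\<dots> = inv a \<otimes> (a \<otimes> x) \<otimes> inv a" by (simp add: assms(3))
  also have "\<dots> = x \<otimes> inv a" using assms(1,2) by (simp add: m_assoc [symmetric])
  finally show ?thesis .
qed

locale central_subgroup = subgroup N G + group G for N and G (structure) +
  assumes central: "\<lbrakk>z \<in> N; x \<in> carrier G\<rbrakk> \<Longrightarrow> z \<otimes> x = x \<otimes> z"

lemma (in central_subgroup) is_normal: "N \<lhd> G"
proof -
  have "x \<otimes> z \<otimes> inv x = z" if "x \<in> carrier G" "z \<in> N" for x z
  proof -
    have "x \<otimes> z \<otimes> inv x = z \<otimes> x \<otimes> inv x" using central[OF that(2,1)] by simp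
    also have "\<dots> = z" using that by (simp add: m_assoc)
    finally show ?thesis .
  qed
  then have "x \<otimes> z \<otimes> inv x \<in> N" if "x \<in> carrier G" "z \<in> N" for x z
    using that by simp
  then show "N \<lhd> G" by (simp add: normal_inv_iff is_subgroup)
qed

sublocale central_subgroup \<subseteq> normal N G
  by (rule is_normal)

lemma (in group) central_subgroup_generate:
  assumes "A \<subseteq> carrier G" and central: "\<And>a x. \<lbrakk>a \<in> A; x \<in> carrier G\<rbrakk> \<Longrightarrow> a \<otimes> x = x \<otimes> a"
  shows "central_subgroup (generate G A) G"
proof
  fix z x assume "z \<in> generate G A" "x \<in> carrier G"
  then show "z \<otimes> x = x \<otimes> z"
  proof (induction z rule: generate.induct)
    case (inv a)
    then show ?case using assms by (blast intro: inv_commute)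
  next
    case (eng a b)
    moreover have "a \<in> carrier G" "b \<in> carrier G"
      using eng.hyps generate_in_carrier[OF assms(1)] by auto
    ultimately show ?case by (metis m_assoc)
  qed (use assms in auto)
qed (use generate_is_subgroup[OF assms(1)] in
     \<open>simp_all add: subgroup.subset subgroup.m_closed subgroup.m_inv_closed subgroup.one_closed\<close>)

lemma (in central_subgroup) infinite_order_mod_mult_iff:
  assumes "z \<in> N" "x \<in> carrier G"
  shows "infinite_order_mod N (z \<otimes> x) \<longleftrightarrow> infinite_order_mod N x"
proof -
  have z: "z [^] n \<in> N" for n :: nat
    using assms(1) subgroup_int_pow_closed[OF is_subgroup, of z "int n"] by (simp add: int_pow_int)
  have "(z \<otimes> x) [^] n = z [^] n \<otimes> x [^] n" for n :: nat
    using pow_mult_distrib[OF central[OF assms]] assms by simp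
  moreover have "z [^] n \<otimes> y \<in> N \<longleftrightarrow> y \<in> N" if y: "y \<in> carrier G" for n :: nat and y
  proof
    assume "z [^] n \<otimes> y \<in> N"
    then have "inv (z [^] n) \<otimes> (z [^] n \<otimes> y) \<in> N" using z by simp
    then show "y \<in> N" using z[of n] y by (simp add: m_assoc [symmetric])
  qed (use z in simp)
  ultimately show ?thesis using assms by (simp add: infinite_order_mod_def)
qed

lemma (in central_subgroup) generate_eq_mult_list_prod:
  assumes S: "S \<subseteq> carrier G" and torsion: "\<And>s. s \<in> S \<Longrightarrow> \<exists>n::nat. 0 < n \<and> s [^] n \<in> N"
    and "y \<in> generate G S"
  shows "\<exists>z xs. z \<in> N \<and> set xs \<subseteq> S \<and> y = z \<otimes> list_prod xs"
  using \<open>y \<in> generate G S\<close>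
proof (induction rule: generate.induct)
  case one
  show ?case by (rule exI[of _ \<one>], rule exI[of _ "[]"]) simp
next
  case (incl s)
  then show ?case using S by (intro exI[of _ \<one>] exI[of _ "[s]"]) auto
next
  case (inv s)
  then have s: "s \<in> carrier G" using S by auto
  obtain n :: nat where n: "0 < n" "s [^] n \<in> N" using torsion inv by blast
  have "s [^] n = s [^] (n - 1) \<otimes> s"
    using n(1) by (metis Suc_diff_1 nat_pow_Suc)
  then have "inv s = inv (s [^] n) \<otimes> s [^] (n - 1)"
    using s by (simp add: inv_mult_group m_assoc)
  then show ?case
    using n(2) inv s by (intro exI[of _ "inv (s [^] n)"] exI[of _ "replicate (n - 1) s"])
      (auto simp: list_prod_replicate)
next
  case (eng a b)
  then obtain z1 xs1 z2 xs2 where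
    a: "z1 \<in> N" "set xs1 \<subseteq> S" "a = z1 \<otimes> list_prod xs1" and
    b: "z2 \<in> N" "set xs2 \<subseteq> S" "b = z2 \<otimes> list_prod xs2"
    by blast
  have closed: "list_prod xs1 \<in> carrier G" "list_prod xs2 \<in> carrier G"
    using a(2) b(2) S by auto
  have "a \<otimes> b = z1 \<otimes> (list_prod xs1 \<otimes> z2) \<otimes> list_prod xs2"
    using a b closed by (simp add: m_assoc)
  also have "list_prod xs1 \<otimes> z2 = z2 \<otimes> list_prod xs1"
    using central[OF b(1) closed(1)] by simp
  also have "z1 \<otimes> (z2 \<otimes> list_prod xs1) \<otimes> list_prod xs2 = (z1 \<otimes> z2) \<otimes> list_prod (xs1 @ xs2)"
    using a b closed S by (simp add: m_assoc list_prod_append)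
  finally show ?case using a b by (intro exI[of _ "z1 \<otimes> z2"] exI[of _ "xs1 @ xs2"]) auto
qed

lemma (in central_subgroup) exists_list_prod_infinite_order_mod:
  assumes S: "S \<subseteq> carrier G" and gen: "generate G S = carrier G" and x: "infinite_order_mod N x"
  shows "\<exists>xs. set xs \<subseteq> S \<and> infinite_order_mod N (list_prod xs)"
proof (rule ccontr)
  assume none: "\<not> ?thesis"
  have "\<exists>n::nat. 0 < n \<and> s [^] n \<in> N" if "s \<in> S" for s
    using none[unfolded not_ex, rule_format, of "[s]"] that subsetD[OF S that]
    by (auto simp: infinite_order_mod_def)
  moreover have "x \<in> generate G S" using x gen by (simp add: infinite_order_mod_def)
  ultimately obtain z xs where "z \<in> N" "set xs \<subseteq> S" "x = z \<otimes> list_prod xs"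
    using generate_eq_mult_list_prod[OF S] by blast
  moreover from this have "list_prod xs \<in> carrier G" using S by auto
  ultimately have "infinite_order_mod N (list_prod xs)"
    using x infinite_order_mod_mult_iff by simp
  then show False using none \<open>set xs \<subseteq> S\<close> by blast
qed

lemma eval_word_Cons: "eval_word G ((s, b) # w) = (if b then s else inv\<^bsub>G\<^esub> s) \<otimes>\<^bsub>G\<^esub> eval_word G w"
  by (cases b) simp_all

lemma (in group) eval_word_closed: "fst ` set w \<subseteq> carrier G \<Longrightarrow> eval_word G w \<in> carrier G"
proof (induction w)
  case (Cons x w)
  then show ?case by (cases x) (simp add: eval_word_Cons)
qed simp

lemma (in group) eval_word_append:
  "\<lbrakk>fst ` set u \<subseteq> carrier G; fst ` set v \<subseteq> carrier G\<rbrakk>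
   \<Longrightarrow> eval_word G (u @ v) = eval_word G u \<otimes> eval_word G v"
proof (induction u)
  case (Cons x u)
  then show ?case by (cases x) (simp add: eval_word_Cons eval_word_closed m_assoc)
qed (simp add: eval_word_closed)

lemma (in group) eval_word_snoc:
  assumes "fst ` set w \<subseteq> carrier G" "s \<in> carrier G"
  shows "eval_word G (w @ [(s, True)]) = eval_word G w \<otimes> s"
    and "eval_word G (w @ [(s, False)]) = eval_word G w \<otimes> inv s"
  using assms by (simp_all add: eval_word_append)

lemma words_letters: "w \<in> words S \<Longrightarrow> fst ` set w \<subseteq> S"
  by (auto simp: words_def)

lemma tr_state_Nil [simp]: "tr_state Q q0 \<delta> [] = q0"
  and tr_state_snoc: "tr_state Q q0 \<delta> (w @ [x]) = tr_step Q \<delta> (tr_state Q q0 \<delta> w) x"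
  by (simp_all add: tr_state_def)

lemma tr_fun_Nil [simp]: "tr_fun Q q0 \<delta> \<eta> [] = []"
  and tr_fun_snoc:
    "tr_fun Q q0 \<delta> \<eta> (w @ [x]) = tr_fun Q q0 \<delta> \<eta> w @ [tr_out Q \<delta> \<eta> (tr_state Q q0 \<delta> w) x]"
  by (auto simp: tr_fun_def nth_append)

context
  fixes Q S' T' q0 \<delta> \<eta>
  assumes M: "inv_rev_transducer Q S' T' q0 \<delta> \<eta>"
begin

lemma delta_inv_eqI:
  assumes "s \<in> S'" "p \<in> Q" "\<delta> p s = q"
  shows "delta_inv Q \<delta> q s = p"
proof -
  have "q \<in> Q" using M assms unfolding inv_rev_transducer_def by blast
  then have "\<exists>!q'. q' \<in> Q \<and> \<delta> q' s = q" using M assms(1) by (simp add: inv_rev_transducer_def)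
  then show ?thesis unfolding delta_inv_def using assms(2,3) by (blast intro: the1_equality)
qed

lemma delta_inv_in:
  assumes "q \<in> Q" "s \<in> S'"
  shows "delta_inv Q \<delta> q s \<in> Q"
proof -
  have "\<exists>!p. p \<in> Q \<and> \<delta> p s = q" using M assms unfolding inv_rev_transducer_def by blast
  then have "delta_inv Q \<delta> q s \<in> Q \<and> \<delta> (delta_inv Q \<delta> q s) s = q"
    unfolding delta_inv_def by (rule theI')
  then show ?thesis ..
qed

lemma tr_state_in: "w \<in> words S' \<Longrightarrow> tr_state Q q0 \<delta> w \<in> Q"
proof (induction w rule: rev_induct)
  case (snoc x w)
  obtain s b where "x = (s, b)" by fastforce
  with snoc M show ?case
    by (cases b) (auto simp: tr_state_snoc words_def inv_rev_transducer_def delta_inv_in)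
qed (use M in \<open>simp add: inv_rev_transducer_def\<close>)

lemma tr_out_in: "\<lbrakk>q \<in> Q; s \<in> S'\<rbrakk> \<Longrightarrow> fst (tr_out Q \<delta> \<eta> q (s, b)) \<in> T'"
  using M delta_inv_in by (cases b) (auto simp: inv_rev_transducer_def)

lemma tr_fun_letters: "w \<in> words S' \<Longrightarrow> fst ` set (tr_fun Q q0 \<delta> \<eta> w) \<subseteq> T'"
proof (induction w rule: rev_induct)
  case (snoc x w)
  obtain s b where "x = (s, b)" by fastforce
  with snoc show ?case by (auto simp: tr_fun_snoc words_def tr_state_in tr_out_in)
qed simp

end

context
  fixes K :: "('a, 'c) monoid_scheme" and H :: "('b, 'd) monoid_scheme"
    and Q S' T' q0 \<delta> \<eta> and \<sigma> :: "'a \<Rightarrow> 'q" and \<Phi> :: "'a \<Rightarrow> 'b"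
  assumes M: "inv_rev_transducer Q S' T' q0 \<delta> \<eta>"
    and K: "group K" and H: "group H" and S'_closed: "S' \<subseteq> carrier K" and T'_closed: "T' \<subseteq> carrier H"
    and init: "\<sigma> \<one>\<^bsub>K\<^esub> = q0" "\<Phi> \<one>\<^bsub>K\<^esub> = \<one>\<^bsub>H\<^esub>"
    and \<sigma>_in: "\<And>k. k \<in> carrier K \<Longrightarrow> \<sigma> k \<in> Q"
    and \<Phi>_closed: "\<And>k. k \<in> carrier K \<Longrightarrow> \<Phi> k \<in> carrier H"
    and \<sigma>_step: "\<And>k s. \<lbrakk>k \<in> carrier K; s \<in> S'\<rbrakk> \<Longrightarrow> \<delta> (\<sigma> k) s = \<sigma> (k \<otimes>\<^bsub>K\<^esub> s)"
    and \<Phi>_step: "\<And>k s. \<lbrakk>k \<in> carrier K; s \<in> S'\<rbrakk> \<Longrightarrow> \<Phi> k \<otimes>\<^bsub>H\<^esub> \<eta> (\<sigma> k) s = \<Phi> (k \<otimes>\<^bsub>K\<^esub> s)"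
begin

text \<open>The transducer only has to be checked on positive letters: reading \<open>s\<^sup>-\<^sup>1\<close> at
  \<open>\<sigma> k\<close> undoes the step by \<open>s\<close> from \<open>k \<otimes> s\<^sup>-\<^sup>1\<close>, by uniqueness of the predecessor state.\<close>

lemma tr_fun_simulation:
  assumes "w \<in> words S'"
  shows "tr_state Q q0 \<delta> w = \<sigma> (eval_word K w) \<and> eval_word H (tr_fun Q q0 \<delta> \<eta> w) = \<Phi> (eval_word K w)"
  using assms
proof (induction w rule: rev_induct)
  case Nil
  then show ?case using init by simp
next
  case (snoc x w)
  interpret K: group K by (rule K)
  interpret H: group H by (rule H)
  obtain s b where x: "x = (s, b)" by fastforce
  have w: "w \<in> words S'" and s: "s \<in> S'" using snoc.prems x by (auto simp: words_def)
  define k where "k = eval_word K w"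
  have k: "k \<in> carrier K"
    unfolding k_def using words_letters[OF w] S'_closed by (intro K.eval_word_closed) auto
  have s_closed: "s \<in> carrier K" using s S'_closed by auto
  have IH: "tr_state Q q0 \<delta> w = \<sigma> k" "eval_word H (tr_fun Q q0 \<delta> \<eta> w) = \<Phi> k"
    using snoc.IH[OF w] k_def by auto
  have out_closed: "fst (tr_out Q \<delta> \<eta> (\<sigma> k) x) \<in> carrier H"
    using tr_out_in[OF M \<sigma>_in[OF k] s] x T'_closed by auto
  have letters: "fst ` set (tr_fun Q q0 \<delta> \<eta> w) \<subseteq> carrier H"
    using tr_fun_letters[OF M w] T'_closed by auto
  have eval_out: "eval_word H (tr_fun Q q0 \<delta> \<eta> (w @ [x]))
      = \<Phi> k \<otimes>\<^bsub>H\<^esub> eval_word H [tr_out Q \<delta> \<eta> (\<sigma> k) x]"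
    using H.eval_word_append[OF letters, of "[tr_out Q \<delta> \<eta> (\<sigma> k) x]"] out_closed
    by (simp add: tr_fun_snoc IH)
  show ?case
  proof (cases b)
    case True
    have "eval_word K (w @ [x]) = k \<otimes>\<^bsub>K\<^esub> s"
      using K.eval_word_snoc(1)[OF _ s_closed] words_letters[OF w] S'_closed x True k_def by auto
    then show ?thesis
      using eval_out out_closed IH \<sigma>_step[OF k s] \<Phi>_step[OF k s] x True by (simp add: tr_state_snoc)
  next
    case False
    define k' where "k' = k \<otimes>\<^bsub>K\<^esub> inv\<^bsub>K\<^esub> s"
    have k': "k' \<in> carrier K" and k'_s: "k' \<otimes>\<^bsub>K\<^esub> s = k"
      unfolding k'_def using k s_closed by (simp_all add: K.m_assoc)
    have pred: "delta_inv Q \<delta> (\<sigma> k) s = \<sigma> k'"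
      using delta_inv_eqI[OF M s \<sigma>_in[OF k']] \<sigma>_step[OF k' s] k'_s by simp
    have eta_closed: "\<eta> (\<sigma> k') s \<in> carrier H"
      using M \<sigma>_in[OF k'] s T'_closed by (auto simp: inv_rev_transducer_def)
    have "\<Phi> k \<otimes>\<^bsub>H\<^esub> inv\<^bsub>H\<^esub> \<eta> (\<sigma> k') s
        = \<Phi> k' \<otimes>\<^bsub>H\<^esub> \<eta> (\<sigma> k') s \<otimes>\<^bsub>H\<^esub> inv\<^bsub>H\<^esub> \<eta> (\<sigma> k') s"
      using \<Phi>_step[OF k' s] k'_s by simp
    also have "\<dots> = \<Phi> k'" using \<Phi>_closed[OF k'] eta_closed by (simp add: H.m_assoc)
    finally have "\<Phi> k \<otimes>\<^bsub>H\<^esub> inv\<^bsub>H\<^esub> \<eta> (\<sigma> k') s = \<Phi> k'" .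
    moreover have "eval_word K (w @ [x]) = k'"
      using K.eval_word_snoc(2)[OF _ s_closed] words_letters[OF w] S'_closed x False k_def k'_def by auto
    ultimately show ?thesis
      using eval_out eta_closed IH pred x False by (simp add: tr_state_snoc)
  qed
qed

end

lemma snake_embeddingI:
  fixes Q :: "nat set"
  assumes "inv_rev_transducer Q S' T' q0 \<delta> \<eta>" and K: "group K" and S'_closed: "S' \<subseteq> carrier K"
    and realizes: "\<And>w. w \<in> words S' \<Longrightarrow> eval_word H (tr_fun Q q0 \<delta> \<eta> w) = \<Phi> (eval_word K w)"
    and inj: "inj_on \<Phi> (carrier K)"
  shows "snake_embedding K S' H T' \<Phi>"
proof -
  have "eval_word K w \<in> carrier K" if "w \<in> words S'" for w
    using group.eval_word_closed[OF K] words_letters[OF that] S'_closed by blast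
  then show ?thesis
    unfolding snake_embedding_def using assms inj_on_eq_iff[OF inj] by metis
qed

lemma carrier_Z2 [simp]: "carrier Z2 = UNIV"
  and one_Z2 [simp]: "\<one>\<^bsub>Z2\<^esub> = (0, 0)"
  and mult_Z2 [simp]: "x \<otimes>\<^bsub>Z2\<^esub> y = (fst x + fst y, snd x + snd y)"
  by (simp_all add: Z2_def)

lemma group_Z2: "group Z2"
proof (rule groupI)
  fix x :: "int \<times> int"
  show "\<exists>y\<in>carrier Z2. y \<otimes>\<^bsub>Z2\<^esub> x = \<one>\<^bsub>Z2\<^esub>"
    by (intro bexI[of _ "(- fst x, - snd x)"]) auto
qed auto

lemma int_mult_add_div_mod:
  fixes k r :: nat
  assumes "r < k"
  shows "(int k * q + int r) div int k = q" and "(int k * q + int r) mod int k = int r"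
  using assms by simp_all

lemma ex1_Suc_mod_eq:
  fixes k q :: nat
  assumes "q < k"
  shows "\<exists>!p. p \<in> {..<k} \<and> Suc p mod k = q"
proof -
  have suc_mod: "Suc p mod k = (if Suc p = k then 0 else Suc p)" if "p < k" for p
    using that by (cases "Suc p = k") auto
  show ?thesis
  proof (rule ex1I[of _ "if q = 0 then k - 1 else q - 1"])
    show "(if q = 0 then k - 1 else q - 1) \<in> {..<k} \<and> Suc (if q = 0 then k - 1 else q - 1) mod k = q"
      using assms suc_mod by auto
  next
    fix p assume p: "p \<in> {..<k} \<and> Suc p mod k = q"
    then have "q = (if Suc p = k then 0 else Suc p)" using suc_mod by auto
    then show "p = (if q = 0 then k - 1 else q - 1)" using p by auto
  qed
qed

locale snake_word = group G for G :: "('g, 'c) monoid_scheme" (structure) +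
  fixes g :: 'g and S :: "'g set" and L :: "'g list"
  assumes g_closed: "g \<in> carrier G"
    and g_central: "x \<in> carrier G \<Longrightarrow> g \<otimes> x = x \<otimes> g"
    and g_ord: "ord g = 0"
    and S_closed: "S \<subseteq> carrier G"
    and L_letters: "set L \<subseteq> S"
    and L_infinite_order: "infinite_order_mod (generate G {g}) (list_prod L)"
    and L_minimal:
      "\<lbrakk>set xs \<subseteq> S; infinite_order_mod (generate G {g}) (list_prod xs)\<rbrakk> \<Longrightarrow> length L \<le> length xs"
begin

sublocale central_subgroup "generate G {g}" G
  using central_subgroup_generate[of "{g}"] g_closed g_central by blast

lemma L_closed: "set L \<subseteq> carrier G"
  using L_letters S_closed by auto

lemma L_nth_closed [simp]: "i < length L \<Longrightarrow> L ! i \<in> carrier G"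
  using L_closed nth_mem by blast

lemma g_pow_in: "g [^] (i::int) \<in> generate G {g}"
  using generate_pow[OF g_closed] by auto

lemma g_pow_central: "x \<in> carrier G \<Longrightarrow> g [^] (i::int) \<otimes> x = x \<otimes> g [^] i"
  using central g_pow_in by blast

lemma g_pow_eq_one_iff: "g [^] (i::int) = \<one> \<longleftrightarrow> i = 0"
  using int_pow_eq_id[OF g_closed] g_ord by simp

lemma L_nonempty: "L \<noteq> []"
  using L_infinite_order generate.one[of G "{g}"]
  by (auto simp: infinite_order_mod_def dest: spec[of _ "1::nat"])

lemma list_prod_factor_notin:
  assumes L: "L = xs @ ys @ zs" and "ys \<noteq> []"
  shows "list_prod ys \<notin> generate G {g}"
proof
  assume ys: "list_prod ys \<in> generate G {g}"
  have closed: "set xs \<subseteq> carrier G" "set ys \<subseteq> carrier G" "set zs \<subseteq> carrier G"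
    using L_closed L by auto
  have "list_prod L = list_prod xs \<otimes> list_prod ys \<otimes> list_prod zs"
    using L closed by (simp add: list_prod_append m_assoc)
  also have "\<dots> = list_prod ys \<otimes> list_prod xs \<otimes> list_prod zs"
    using closed central[OF ys, of "list_prod xs"] by simp
  also have "\<dots> = list_prod ys \<otimes> list_prod (xs @ zs)"
    using closed by (simp add: list_prod_append m_assoc)
  finally have "infinite_order_mod (generate G {g}) (list_prod (xs @ zs))"
    using L_infinite_order infinite_order_mod_mult_iff[OF ys] closed by simp
  then have "length L \<le> length (xs @ zs)"
    using L_minimal[of "xs @ zs"] L_letters L by simp
  then show False using L \<open>ys \<noteq> []\<close> by simp
qed

lemma L_nth_notin: "i < length L \<Longrightarrow> L ! i \<notin> generate G {g}"
  using list_prod_factor_notin[of "take i L" "[L ! i]" "drop (Suc i) L"] id_take_nth_drop[of i L] by simp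

definition prefix_prod :: "nat \<Rightarrow> 'g" where
  "prefix_prod r = list_prod (take r L)"

text \<open>The product of the first \<open>n\<close> letters of the periodic word \<open>L L L \<dots>\<close>, extended
  to all integers \<open>n\<close>.\<close>

definition periodic_prod :: "int \<Rightarrow> 'g" where
  "periodic_prod n =
     list_prod L [^] (n div int (length L)) \<otimes> prefix_prod (nat (n mod int (length L)))"

definition snake_map :: "int \<times> int \<Rightarrow> 'g" where
  "snake_map v = g [^] fst v \<otimes> periodic_prod (snd v)"

definition snake_state :: "int \<times> int \<Rightarrow> nat" where
  "snake_state v = nat (snd v mod int (length L))"

definition snake_delta :: "nat \<Rightarrow> int \<times> int \<Rightarrow> nat" where
  "snake_delta q s = (if s = (1, 0) then q else Suc q mod length L)"

definition snake_eta :: "nat \<Rightarrow> int \<times> int \<Rightarrow> 'g" where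
  "snake_eta q s = (if s = (1, 0) then g else L ! q)"

lemma prefix_prod_closed [simp]: "prefix_prod r \<in> carrier G"
  using L_closed by (auto simp: prefix_prod_def dest: in_set_takeD intro!: list_prod_closed)

lemma prefix_prod_0 [simp]: "prefix_prod 0 = \<one>"
  by (simp add: prefix_prod_def)

lemma prefix_prod_length: "prefix_prod (length L) = list_prod L"
  by (simp add: prefix_prod_def)

lemma prefix_prod_add:
  assumes "r \<le> r'"
  shows "prefix_prod r' = prefix_prod r \<otimes> list_prod (take (r' - r) (drop r L))"
proof -
  have "take r' L = take r L @ take (r' - r) (drop r L)"
    using assms take_add[of r "r' - r" L] by simp
  moreover have "set (take r L) \<subseteq> carrier G" "set (take (r' - r) (drop r L)) \<subseteq> carrier G"
    using L_closed by (auto dest: in_set_takeD in_set_dropD)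
  ultimately show ?thesis by (simp add: prefix_prod_def list_prod_append)
qed

lemma prefix_prod_Suc:
  assumes "r < length L"
  shows "prefix_prod (Suc r) = prefix_prod r \<otimes> L ! r"
proof -
  have "set (take r L) \<subseteq> carrier G" using L_closed by (auto dest: in_set_takeD)
  then show ?thesis using assms by (simp add: prefix_prod_def take_Suc_conv_app_nth list_prod_append)
qed

lemma periodic_prod_closed [simp]: "periodic_prod n \<in> carrier G"
  unfolding periodic_prod_def using L_closed by simp

lemma periodic_prod_eq:
  assumes "r < length L"
  shows "periodic_prod (int (length L) * q + int r) = list_prod L [^] q \<otimes> prefix_prod r"
  using int_mult_add_div_mod[OF assms, of q] by (simp add: periodic_prod_def)

lemma length_div_mod_decomp:
  "n = int (length L) * (n div int (length L)) + int (nat (n mod int (length L)))"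
  "nat (n mod int (length L)) < length L"
  using L_nonempty by (simp_all add: nat_less_iff)

lemma periodic_prod_succ: "periodic_prod (n + 1) = periodic_prod n \<otimes> L ! nat (n mod int (length L))"
proof -
  define q where "q = n div int (length L)"
  define r where "r = nat (n mod int (length L))"
  have n: "n = int (length L) * q + int r" and r: "r < length L"
    unfolding q_def r_def by (rule length_div_mod_decomp)+
  have h_closed: "list_prod L \<in> carrier G" using L_closed by simp
  have "periodic_prod (n + 1) = list_prod L [^] q \<otimes> prefix_prod (Suc r)"
  proof (cases "Suc r < length L")
    case True
    have "n + 1 = int (length L) * q + int (Suc r)" using n by simp
    then show ?thesis using periodic_prod_eq[OF True] by (simp only:)
  next
    case False
    then have r_last: "Suc r = length L" using r by simp
    then have "n + 1 = int (length L) * (q + 1) + int 0" using n by (simp add: algebra_simps)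
    then have "periodic_prod (n + 1) = list_prod L [^] (q + 1) \<otimes> prefix_prod 0"
      using periodic_prod_eq[of 0 "q + 1"] L_nonempty by (simp only:) simp
    also have "\<dots> = list_prod L [^] (q + 1)" using h_closed by simp
    also have "\<dots> = list_prod L [^] q \<otimes> list_prod L" using h_closed by (simp add: int_pow_mult)
    finally show ?thesis using r_last prefix_prod_length by simp
  qed
  also have "\<dots> = periodic_prod n \<otimes> L ! r"
    using n periodic_prod_eq[OF r] prefix_prod_Suc[OF r] h_closed r by (simp add: m_assoc)
  finally show ?thesis by (simp add: r_def)
qed


lemma snake_map_closed [simp]: "snake_map v \<in> carrier G"
  unfolding snake_map_def using g_closed by simp

lemma snake_map_zero: "snake_map (0, 0) = \<one>"
  by (simp add: snake_map_def periodic_prod_def)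

lemma snake_map_step_fst: "snake_map v \<otimes> g = snake_map (fst v + 1, snd v)"
proof -
  have "g [^] fst v \<otimes> periodic_prod (snd v) \<otimes> g = g [^] fst v \<otimes> g \<otimes> periodic_prod (snd v)"
    using g_closed g_central[of "periodic_prod (snd v)"] by (simp add: m_assoc)
  then show ?thesis
    unfolding snake_map_def using g_closed by (simp add: int_pow_mult)
qed

lemma snake_map_step_snd: "snake_map v \<otimes> L ! snake_state v = snake_map (fst v, snd v + 1)"
  unfolding snake_map_def snake_state_def using g_closed L_nonempty
  by (simp add: periodic_prod_succ m_assoc nat_less_iff)

lemma snake_state_less: "snake_state v < length L"
  unfolding snake_state_def using L_nonempty by (simp add: nat_less_iff)

lemma snake_state_step_snd: "Suc (snake_state v) mod length L = snake_state (fst v, snd v + 1)"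
  unfolding snake_state_def using L_nonempty
  by (simp add: add.commute mod_add_right_eq nat_mod_as_int)

lemma snake_transducer:
  "inv_rev_transducer {..<length L} {(1, 0), (0, 1)} (S \<union> {g}) 0 snake_delta snake_eta"
proof -
  have "g \<in> generate G {g}" by (simp add: generate.incl)
  then have "inj_on (snake_eta q) {(1, 0), (0, 1)}" if "q < length L" for q
    using L_nth_notin[OF that] by (auto simp: snake_eta_def)
  moreover have "L ! q \<in> S" if "q < length L" for q
    using L_letters nth_mem[OF that] by blast
  ultimately show ?thesis
    unfolding inv_rev_transducer_def snake_delta_def
    using L_nonempty ex1_Suc_mod_eq by (auto simp: snake_eta_def)
qed

lemma snake_map_eq:
  "r < length L \<Longrightarrow>
    snake_map (m, int (length L) * q + int r) = g [^] m \<otimes> list_prod L [^] q \<otimes> prefix_prod r"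
  using periodic_prod_eq g_closed L_closed by (simp add: snake_map_def m_assoc)

lemma snake_map_eq_factor:
  assumes r: "r \<le> r'" "r' < length L"
    and eq: "snake_map (m, int (length L) * q + int r) = snake_map (m', int (length L) * q' + int r')"
  shows "list_prod (take (r' - r) (drop r L))
    = inv (prefix_prod r) \<otimes> (g [^] (m - m') \<otimes> list_prod L [^] (q - q')) \<otimes> prefix_prod r"
proof -
  define h where "h = list_prod L"
  define U where "U = list_prod (take (r' - r) (drop r L))"
  define P where "P = prefix_prod r"
  define B where "B = g [^] m' \<otimes> h [^] q'"
  define Z where "Z = g [^] (m - m') \<otimes> h [^] (q - q')"
  have h: "h \<in> carrier G" unfolding h_def using L_closed by simp
  have U: "U \<in> carrier G"
    unfolding U_def using L_closed by (auto dest: in_set_takeD in_set_dropD intro!: list_prod_closed)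
  have P: "P \<in> carrier G" and B: "B \<in> carrier G" and Z: "Z \<in> carrier G"
    unfolding P_def B_def Z_def using h g_closed by simp_all
  have "B \<otimes> Z = g [^] m' \<otimes> (h [^] q' \<otimes> g [^] (m - m')) \<otimes> h [^] (q - q')"
    unfolding B_def Z_def using h g_closed by (simp add: m_assoc)
  also have "h [^] q' \<otimes> g [^] (m - m') = g [^] (m - m') \<otimes> h [^] q'"
    using g_pow_central[of "h [^] q'"] h by simp
  also have "g [^] m' \<otimes> (g [^] (m - m') \<otimes> h [^] q') \<otimes> h [^] (q - q')
      = (g [^] m' \<otimes> g [^] (m - m')) \<otimes> (h [^] q' \<otimes> h [^] (q - q'))"
    using h g_closed by (simp add: m_assoc)
  also have "\<dots> = g [^] m \<otimes> h [^] q"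
    using h g_closed by (simp add: int_pow_mult [symmetric])
  finally have BZ: "B \<otimes> Z = g [^] m \<otimes> h [^] q" .
  have "B \<otimes> (Z \<otimes> P) = snake_map (m, int (length L) * q + int r)"
    using BZ B Z P snake_map_eq[of r m q] r by (simp add: m_assoc [symmetric] h_def P_def)
  also have "\<dots> = snake_map (m', int (length L) * q' + int r')" by (rule eq)
  also have "\<dots> = B \<otimes> (P \<otimes> U)"
    using snake_map_eq[OF r(2)] prefix_prod_add[OF r(1)] h g_closed
    by (simp add: B_def h_def P_def U_def m_assoc)
  finally have "Z \<otimes> P = P \<otimes> U" using B Z P U by simp
  have "U = inv P \<otimes> (P \<otimes> U)" using P U by (simp add: m_assoc [symmetric])
  also have "\<dots> = inv P \<otimes> Z \<otimes> P" using \<open>Z \<otimes> P = P \<otimes> U\<close> P Z by (simp add: m_assoc)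
  finally show ?thesis by (simp add: U_def P_def Z_def h_def)
qed

lemma snake_map_eq_imp_eq:
  assumes r: "r \<le> r'" "r' < length L"
    and eq: "snake_map (m, int (length L) * q + int r) = snake_map (m', int (length L) * q' + int r')"
  shows "m = m' \<and> q = q' \<and> r = r'"
proof -
  define F where "F = take (r' - r) (drop r L)"
  define P where "P = prefix_prod r"
  have F_letters: "set F \<subseteq> S" using L_letters by (auto simp: F_def dest: in_set_takeD in_set_dropD)
  have P: "P \<in> carrier G" by (simp add: P_def)
  have F: "list_prod F = inv P \<otimes> (g [^] (m - m') \<otimes> list_prod L [^] (q - q')) \<otimes> P"
    using snake_map_eq_factor[OF r eq] by (simp add: F_def P_def)
  have "q = q'"
  proof (rule ccontr)
    assume "q \<noteq> q'"
    then have "infinite_order_mod (generate G {g}) (list_prod L [^] (q - q'))"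
      using infinite_order_mod_int_pow[OF is_subgroup L_infinite_order] by simp
    then have "infinite_order_mod (generate G {g}) (g [^] (m - m') \<otimes> list_prod L [^] (q - q'))"
      using infinite_order_mod_mult_iff[OF g_pow_in] L_closed by simp
    then have "infinite_order_mod (generate G {g}) (list_prod F)"
      using infinite_order_mod_conj[OF is_normal _ P] F by simp
    then have "length L \<le> length F" using L_minimal F_letters by blast
    then show False using r by (simp add: F_def)
  qed
  have "list_prod F = inv P \<otimes> (P \<otimes> g [^] (m - m'))"
    using F \<open>q = q'\<close> g_pow_central[OF P] P g_closed by (simp add: m_assoc)
  also have "\<dots> = g [^] (m - m')" using P g_closed by (simp add: m_assoc [symmetric])
  finally have F_g: "list_prod F = g [^] (m - m')" .
  have "r = r'"
  proof (rule ccontr)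
    assume "r \<noteq> r'"
    then have "F \<noteq> []" using r by (simp add: F_def)
    moreover have "L = take r L @ F @ drop r' L"
      unfolding F_def using r by (metis append.assoc append_take_drop_id le_add_diff_inverse take_add)
    ultimately show False using list_prod_factor_notin F_g g_pow_in by metis
  qed
  then have "g [^] (m - m') = \<one>" using F_g by (simp add: F_def)
  then show ?thesis using \<open>q = q'\<close> \<open>r = r'\<close> g_pow_eq_one_iff by simp
qed

lemma snake_map_inj: "inj snake_map"
proof (rule injI)
  fix v v' :: "int \<times> int"
  assume eq: "snake_map v = snake_map v'"
  obtain m n m' n' where v: "v = (m, n)" "v' = (m', n')" by fastforce
  define q where "q = n div int (length L)"
  define r where "r = nat (n mod int (length L))"
  define q' where "q' = n' div int (length L)"
  define r' where "r' = nat (n' mod int (length L))"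
  have n: "n = int (length L) * q + int r" "n' = int (length L) * q' + int r'"
    and r: "r < length L" "r' < length L"
    unfolding q_def r_def q'_def r'_def by (rule length_div_mod_decomp)+
  have eq': "snake_map (m, int (length L) * q + int r) = snake_map (m', int (length L) * q' + int r')"
    using eq v n by simp
  consider "r \<le> r'" | "r' \<le> r" by linarith
  then show "v = v'"
  proof cases
    case 1
    then show ?thesis using snake_map_eq_imp_eq[OF 1 r(2) eq'] v n by simp
  next
    case 2
    then show ?thesis using snake_map_eq_imp_eq[OF 2 r(1) eq' [symmetric]] v n by simp
  qed
qed

lemma snake_embedding: "snake_embedding Z2 {(1, 0), (0, 1)} G (S \<union> {g}) snake_map"
proof (rule snake_embeddingI[OF snake_transducer group_Z2])
  show "{(1, 0), (0, 1)} \<subseteq> carrier Z2" by simp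
  show "inj_on snake_map (carrier Z2)" using snake_map_inj by simp
  fix w :: "((int \<times> int) \<times> bool) list"
  assume w: "w \<in> words {(1, 0), (0, 1)}"
  have "tr_state {..<length L} 0 snake_delta w = snake_state (eval_word Z2 w) \<and>
      eval_word G (tr_fun {..<length L} 0 snake_delta snake_eta w) = snake_map (eval_word Z2 w)"
  proof (rule tr_fun_simulation[OF snake_transducer group_Z2 is_group])
    show "{(1, 0), (0, 1)} \<subseteq> carrier Z2" by simp
    show "S \<union> {g} \<subseteq> carrier G" using S_closed g_closed by simp
    show "snake_state \<one>\<^bsub>Z2\<^esub> = 0" by (simp add: snake_state_def)
    show "snake_map \<one>\<^bsub>Z2\<^esub> = \<one>" by (simp add: snake_map_zero)
    show "snake_state k \<in> {..<length L}" if "k \<in> carrier Z2" for k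
      using snake_state_less by simp
    show "snake_map k \<in> carrier G" if "k \<in> carrier Z2" for k
      by (rule snake_map_closed)
    show "snake_delta (snake_state k) s = snake_state (k \<otimes>\<^bsub>Z2\<^esub> s)"
      if "k \<in> carrier Z2" and s: "s \<in> {(1, 0), (0, 1)}" for k s
    proof -
      consider "s = (1, 0)" | "s = (0, 1)" using s by blast
      then show ?thesis
        by cases (simp add: snake_delta_def snake_state_def, simp add: snake_delta_def snake_state_step_snd)
    qed
    show "snake_map k \<otimes> snake_eta (snake_state k) s = snake_map (k \<otimes>\<^bsub>Z2\<^esub> s)"
      if "k \<in> carrier Z2" "s \<in> {(1, 0), (0, 1)}" for k s
      using that(2) snake_map_step_fst[of k] snake_map_step_snd[of k] by (auto simp: snake_eta_def)
  qed (rule w)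
  then show "eval_word G (tr_fun {..<length L} 0 snake_delta snake_eta w) = snake_map (eval_word Z2 w)" ..
qed

end

theorem lemma2:
  fixes G :: "('g, 'c) monoid_scheme" and S :: "'g set" and g :: 'g
  assumes "group G"
    and "finite S" and "S \<subseteq> carrier G" and "generate G S = carrier G"
    and "g \<in> carrier G"
    and "\<forall>n::nat. n > 0 \<longrightarrow> g [^]\<^bsub>G\<^esub> n \<noteq> \<one>\<^bsub>G\<^esub>"
    and "\<forall>x\<in>carrier G. g \<otimes>\<^bsub>G\<^esub> x = x \<otimes>\<^bsub>G\<^esub> g"
    and "\<not> torsion_group (G Mod generate G {g})"
  shows "\<exists>\<phi>. snake_embedding Z2 {(1, 0), (0, 1)} G (S \<union> {g}) \<phi>"
proof -
  interpret central_subgroup "generate G {g}" G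
    using group.central_subgroup_generate[OF assms(1), of "{g}"] assms(5,7) by blast
  obtain x where "infinite_order_mod (generate G {g}) x"
    using exists_infinite_order_mod assms(8) by blast
  then obtain xs where "set xs \<subseteq> S" "infinite_order_mod (generate G {g}) (list_prod xs)"
    using exists_list_prod_infinite_order_mod assms(3,4) by blast
  then obtain L where L: "set L \<subseteq> S \<and> infinite_order_mod (generate G {g}) (list_prod L)"
    and L_min: "\<And>xs. set xs \<subseteq> S \<and> infinite_order_mod (generate G {g}) (list_prod xs) \<Longrightarrow>
      length L \<le> length xs"
    using ex_has_least_nat[of "\<lambda>xs. set xs \<subseteq> S \<and> infinite_order_mod (generate G {g}) (list_prod xs)"
        xs length]
    by blast
  have "ord g = 0" using ord_eq_0[OF assms(5)] assms(6) by blast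
  interpret snake_word G g S L
    by unfold_locales (use assms L L_min \<open>ord g = 0\<close> in auto)
  show ?thesis using snake_embedding by blast
qed

end
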